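(* Let $\sum_{n=1}^{\infty}x_n$ be a divergent series of positive real terms with $\lim_{n\to\infty}x_n=0$, and let $S=\{\sum_{n=1}^{\infty}(x_n-x_{\sigma(n)}) : \sigma\in S_\infty,\ \text{the series converges}\}$. If $b\in S$, then $[b,\infty)\subseteq S$.
   Context: $S_\infty$ denotes the set of all permutations of $\mathbb{N}$. *)

theory Defs
  imports "HOL-Analysis.Analysis"
begin

text \<open>Sequences are indexed from 0 (x 0 corresponds to x_1). Permutations of the
naturals are bijections nat to nat.\<close>

definition rearr_diff_sums :: "(nat \<Rightarrow> real) \<Rightarrow> real set" where
  "rearr_diff_sums x = {b. \<exists>\<sigma>. bij \<sigma> \<and> (\<lambda>n. x n - x (\<sigma> n)) sums b}"

end

theory Submission
  imports Defs
begin

text \<open>If \<sigma> realises b, then y = x \<circ> \<sigma> is again a positive divergent null sequence and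
  x n - x (\<sigma> (p n)) = (x n - y n) + (y n - y (p n)); so it suffices to realise every d \<ge> 0 as
  \<Sum>(y n - y (p n)) for such a y. The permutation p is built greedily. The partial sum up to N
  equals the y-sum over the pending indices (below N and not yet hit by p) minus the y-sum over
  the indices \<ge> N that p has already hit. The latter are drawn from a sparse reservoir on which
  y is summable, so they contribute nothing in the limit. An index is left pending as long as the
  pending sum stays \<le> d; otherwise the least pending index is released, provided this does not
  increase the pending sum. Divergence of \<Sum>y forces such overflows infinitely often, which
  makes p surjective and pushes the pending sum up to d.\<close>

lemma filterlim_inj_sequentially:
  fixes s :: "nat \<Rightarrow> nat"
  assumes "inj s"
  shows "filterlim s sequentially sequentially"
  unfolding filterlim_at_top
proof
  fix Z
  have "finite (s -` {..<Z})" using assms by (intro finite_vimageI) auto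
  thus "\<forall>\<^sub>F n in sequentially. Z \<le> s n"
    by (simp add: cofinite_eq_sequentially[symmetric] eventually_cofinite not_le vimage_def)
qed

lemma not_summable_comp_bij:
  fixes x :: "nat \<Rightarrow> real"
  assumes "\<And>n. 0 \<le> x n" "bij \<sigma>" "\<not> summable x"
  shows "\<not> summable (x \<circ> \<sigma>)"
proof
  assume "summable (x \<circ> \<sigma>)"
  moreover have "inj (inv \<sigma>)" using assms(2) by (simp add: bij_is_inj bij_imp_bij_inv)
  ultimately have "summable (x \<circ> \<sigma> \<circ> inv \<sigma>)" by (rule summable_reindex) (simp add: assms(1))
  moreover have "x \<circ> \<sigma> \<circ> inv \<sigma> = x" using assms(2) by (metis comp_assoc comp_id bij_is_surj surj_iff)
  ultimately show False using assms(3) by simp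
qed

lemma sum_power_le_geometric_tail:
  fixes q :: real
  assumes "0 \<le> q" "q < 1" "finite G" "G \<subseteq> {K..}"
  shows "(\<Sum>k\<in>G. q ^ k) \<le> q ^ K / (1 - q)"
proof -
  define M where "M = Max (insert K G)"
  have "(\<Sum>k\<in>G. q ^ k) \<le> (\<Sum>k=K..M. q ^ k)"
    using assms by (intro sum_mono2) (auto simp: M_def)
  also have "\<dots> = (q ^ K - q ^ Suc M) / (1 - q)"
    using assms by (simp add: sum_gp M_def)
  also have "\<dots> \<le> q ^ K / (1 - q)"
    using assms by (simp add: divide_right_mono)
  finally show ?thesis .
qed

lemma sum_Un_le_nonneg:
  fixes f :: "'a \<Rightarrow> 'b::ordered_ab_group_add"
  assumes "finite A" "finite B" "\<And>x. 0 \<le> f x"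
  shows "sum f (A \<union> B) \<le> sum f A + sum f B"
  using assms by (simp add: sum_Un sum_nonneg)

lemma exists_strict_mono_below:
  fixes y :: "nat \<Rightarrow> real"
  assumes "y \<longlonglongrightarrow> 0" "\<And>k. 0 < e k"
  obtains a :: "nat \<Rightarrow> nat" where "strict_mono a" "\<And>k. y (a k) < e k"
proof -
  have "\<forall>k. \<exists>N. \<forall>n\<ge>N. y n < e k"
    using order_tendstoD(2)[OF assms(1) assms(2)] by (simp add: eventually_sequentially)
  then obtain h where h: "\<And>k n. h k \<le> n \<Longrightarrow> y n < e k" by metis
  define a where "a k = (\<Sum>i\<le>k. h i) + k" for k
  have "strict_mono a" unfolding strict_mono_Suc_iff a_def by simp
  moreover have "h k \<le> a k" for k
    unfolding a_def using member_le_sum[of k "{..k}" h] by simp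
  ultimately show thesis using that h by blast
qed

locale greedy_rearrangement =
  fixes y :: "nat \<Rightarrow> real" and d :: real and a :: "nat \<Rightarrow> nat"
  assumes pos: "\<And>n. 0 < y n" and not_summable: "\<not> summable y" and lim: "y \<longlonglongrightarrow> 0"
    and nonneg: "0 \<le> d" and strict_mono_a: "strict_mono a"
    and small_a: "\<And>k. y (a k) \<le> (1/2) ^ k"
begin

definition reserve :: "nat set" where
  "reserve = range a"

definition next_reserve :: "nat \<Rightarrow> nat set \<Rightarrow> nat" where
  "next_reserve N V = (LEAST m. m \<in> reserve \<and> N < m \<and> m \<notin> V)"

definition choice :: "nat \<Rightarrow> nat set \<Rightarrow> nat" where
  "choice N V =
    (let Q = {..<N} - V in
     if N \<in> V \<or> sum y Q + y N \<le> d then next_reserve N V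
     else if Q \<noteq> {} \<and> y N \<le> y (Min Q) then Min Q
     else N)"

primrec used :: "nat \<Rightarrow> nat set" where
  "used 0 = {}"
| "used (Suc N) = insert (choice N (used N)) (used N)"

definition p :: "nat \<Rightarrow> nat" where
  "p N = choice N (used N)"

definition pending :: "nat \<Rightarrow> nat set" where
  "pending N = {..<N} - used N"

definition advanced :: "nat \<Rightarrow> nat set" where
  "advanced N = used N - {..<N}"

lemma p_eq:
  "p N = (if N \<in> used N \<or> sum y (pending N) + y N \<le> d then next_reserve N (used N)
          else if pending N \<noteq> {} \<and> y N \<le> y (Min (pending N)) then Min (pending N)
          else N)"
  by (simp add: p_def choice_def pending_def Let_def)

lemma used_Suc: "used (Suc N) = insert (p N) (used N)"
  by (simp add: p_def)

declare used.simps(2) [simp del]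

lemma finite_used [simp]: "finite (used N)"
  by (induction N) (auto simp: used_Suc)

lemma finite_pending [simp]: "finite (pending N)"
  by (simp add: pending_def)

lemma next_reserve:
  assumes "finite V"
  shows "next_reserve N V \<in> reserve" "N < next_reserve N V" "next_reserve N V \<notin> V"
proof -
  have "infinite reserve"
    unfolding reserve_def using strict_mono_a
    by (simp add: range_inj_infinite strict_mono_imp_inj_on)
  hence "infinite (reserve - V - {..N})" using assms by simp
  then obtain m where "m \<in> reserve - V - {..N}" by (metis ex_in_conv finite.emptyI)
  hence "\<exists>m. m \<in> reserve \<and> N < m \<and> m \<notin> V" by auto
  from LeastI_ex[OF this]
  show "next_reserve N V \<in> reserve" "N < next_reserve N V" "next_reserve N V \<notin> V"
    unfolding next_reserve_def by auto
qed

lemma pending_subset: "pending N \<subseteq> {..<N}"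
  by (auto simp: pending_def)

lemma not_in_pending_self [simp]: "N \<notin> pending N"
  by (simp add: pending_def)

lemma pending_Suc: "pending (Suc N) = (pending N \<union> ({N} - used N)) - {p N}"
  unfolding pending_def by (auto simp: used_Suc lessThan_Suc)

lemma step_cases:
  obtains (taken) "N \<in> used N" "N < p N" "p N \<in> reserve" "pending (Suc N) = pending N"
  | (wait) "N \<notin> used N" "sum y (pending N) + y N \<le> d" "N < p N" "p N \<in> reserve"
      "pending (Suc N) = insert N (pending N)"
  | (release) "N \<notin> used N" "d < sum y (pending N) + y N"
      "Min (pending N) \<in> pending N" "p N = Min (pending N)" "y N \<le> y (Min (pending N))"
      "pending (Suc N) = insert N (pending N - {Min (pending N)})"
  | (stay) "N \<notin> used N" "d < sum y (pending N) + y N"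
      "pending N = {} \<or> y (Min (pending N)) < y N" "p N = N" "pending (Suc N) = pending N"
proof -
  consider "N \<in> used N \<or> sum y (pending N) + y N \<le> d" "p N = next_reserve N (used N)"
    | "N \<notin> used N" "d < sum y (pending N) + y N" "pending N \<noteq> {}"
        "y N \<le> y (Min (pending N))" "p N = Min (pending N)"
    | "N \<notin> used N" "d < sum y (pending N) + y N"
        "pending N = {} \<or> y (Min (pending N)) < y N" "p N = N"
    by (cases "N \<in> used N \<or> sum y (pending N) + y N \<le> d";
        cases "pending N \<noteq> {} \<and> y N \<le> y (Min (pending N))")
      (simp_all add: p_eq not_le)
  thus thesis
  proof cases
    case 1
    with next_reserve[OF finite_used, of N N] pending_subset[of N]
    have "p N \<notin> pending N" "N < p N" "p N \<in> reserve" by auto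
    show thesis
    proof (cases "N \<in> used N")
      case True
      hence "pending (Suc N) = pending N"
        using pending_Suc \<open>p N \<notin> pending N\<close> by auto
      with True \<open>N < p N\<close> \<open>p N \<in> reserve\<close> show thesis by (rule taken)
    next
      case False
      hence "pending (Suc N) = insert N (pending N)"
        using pending_Suc \<open>p N \<notin> pending N\<close> \<open>N < p N\<close> by auto
      with False 1 \<open>N < p N\<close> \<open>p N \<in> reserve\<close> show thesis by (intro wait) auto
    qed
  next
    case 2
    have "Min (pending N) \<in> pending N" using 2(3) by simp
    hence "pending (Suc N) = insert N (pending N - {Min (pending N)})"
      unfolding pending_Suc 2(5) using 2(1) by (intro set_eqI) (metis Diff_iff insert_iff Un_iff singletonD not_in_pending_self)
    with 2 \<open>Min (pending N) \<in> pending N\<close> show thesis by (intro release) auto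
  next
    case 3
    moreover have "pending (Suc N) = pending N"
      unfolding pending_Suc 3(4) using 3(1) not_in_pending_self by blast
    ultimately show thesis by (intro stay)
  qed
qed

lemma p_notin_used: "p N \<notin> used N"
proof (cases N rule: step_cases)
  case release
  thus ?thesis by (metis DiffD2 pending_def)
next
  case stay
  thus ?thesis by simp
qed (simp_all add: p_eq next_reserve)

lemma used_mono: "m \<le> n \<Longrightarrow> used m \<subseteq> used n"
  by (induction n rule: dec_induct) (auto simp: used_Suc)

lemma used_eq_image: "used N = p ` {..<N}"
  by (induction N) (auto simp: used_Suc lessThan_Suc)

lemma inj_p: "inj p"
proof (rule injI)
  have neq: "p m \<noteq> p n" if "m < n" for m n
    using p_notin_used[of n] that unfolding used_eq_image by (metis imageI lessThan_iff)
  fix m n assume "p m = p n"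
  thus "m = n" using neq by (metis linorder_neqE_nat)
qed

lemma p_in_reserve_if_gt:
  assumes "k < p k"
  shows "p k \<in> reserve"
proof (cases k rule: step_cases)
  case release
  thus ?thesis using assms by (metis DiffD1 lessThan_iff not_less_iff_gr_or_eq pending_def)
qed (use assms in simp_all)

lemma sum_reserve_le:
  assumes "finite F" "F \<subseteq> a ` {K..}"
  shows "sum y F \<le> 2 * (1/2) ^ K"
proof -
  have inj: "inj a" using strict_mono_a by (rule strict_mono_imp_inj_on)
  define G where "G = a -` F"
  have F: "F = a ` G" using assms(2) unfolding G_def by auto
  have G: "finite G" "G \<subseteq> {K..}"
    using assms inj unfolding G_def by (auto intro: finite_vimageI dest: injD)
  have "sum y F = (\<Sum>k\<in>G. y (a k))"
    unfolding F using inj by (simp add: sum.reindex inj_on_subset)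
  also have "\<dots> \<le> (\<Sum>k\<in>G. (1/2) ^ k)" by (intro sum_mono small_a)
  also have "\<dots> \<le> (1/2) ^ K / (1 - 1/2)" by (rule sum_power_le_geometric_tail) (use G in auto)
  finally show ?thesis by simp
qed

lemma sum_pending_release:
  assumes "Min (pending N) \<in> pending N"
    and "pending (Suc N) = insert N (pending N - {Min (pending N)})"
  shows "sum y (pending (Suc N)) = sum y (pending N) + y N - y (Min (pending N))"
  using assms by (simp add: sum_diff1)

lemma sum_pending_le: "sum y (pending N) \<le> d"
proof (induction N)
  case 0
  thus ?case using nonneg by (simp add: pending_def)
next
  case (Suc N)
  show ?case
  proof (cases N rule: step_cases)
    case release
    thus ?thesis using sum_pending_release[OF release(3,6)] Suc.IH by linarith
  qed (use Suc.IH in simp_all)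
qed

lemma sum_pending_Suc_ge:
  assumes "y N \<le> e" "pending N \<noteq> {} \<Longrightarrow> y (Min (pending N)) \<le> e"
    and "d - e \<le> sum y (pending N) \<or> (N \<notin> used N \<and> d < sum y (pending N) + y N)"
  shows "d - e \<le> sum y (pending (Suc N))"
proof (cases N rule: step_cases)
  case wait
  thus ?thesis using assms(3) pos[of N] by auto
next
  case release
  thus ?thesis using sum_pending_release[OF release(3,6)] assms(2) by force
next
  case stay
  thus ?thesis using assms(1) by simp
qed (use assms(3) in simp)

lemma frequently_overflow: "\<exists>N\<ge>N0. N \<notin> used N \<and> d < sum y (pending N) + y N"
proof (rule ccontr)
  assume no_overflow: "\<not> ?thesis"
  \<comment> \<open>then p never hits an index \<ge> N0 outside the reserve, so all those indices stay pending
    and their y-sum is bounded by d, while the reserve contributes at most 2\<close>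
  have advance: "p k \<in> reserve" if "N0 \<le> k" for k
    using that no_overflow by (cases k rule: step_cases) auto
  have never_used: "n \<notin> used M" if "N0 \<le> n" "n \<notin> reserve" for n M
  proof
    assume "n \<in> used M"
    then obtain k where k: "n = p k" by (auto simp: used_eq_image)
    show False
    proof (cases "k < n")
      case True
      thus False using p_in_reserve_if_gt[of k] that k by auto
    next
      case False
      thus False using advance[of k] that k by auto
    qed
  qed
  have "(\<Sum>k\<le>m. y k) \<le> sum y {..<N0} + 2 + d" for m
  proof -
    have "{..m} \<subseteq> {..<N0} \<union> (reserve \<inter> {..m}) \<union> pending (Suc m)"
      by (auto simp: pending_def not_less) (metis never_used)
    hence "(\<Sum>k\<le>m. y k) \<le> sum y ({..<N0} \<union> (reserve \<inter> {..m}) \<union> pending (Suc m))"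
      by (intro sum_mono2) (auto intro: less_imp_le pos)
    also have "\<dots> \<le> sum y {..<N0} + sum y (reserve \<inter> {..m}) + sum y (pending (Suc m))"
      by (intro order_trans[OF sum_Un_le_nonneg] add_right_mono sum_Un_le_nonneg)
         (auto intro: less_imp_le pos)
    also have "sum y (reserve \<inter> {..m}) \<le> 2"
      using sum_reserve_le[of "reserve \<inter> {..m}" 0] by (auto simp: reserve_def)
    finally show ?thesis using sum_pending_le[of "Suc m"] by linarith
  qed
  hence "summable y" by (intro bounded_imp_summable) (auto intro: less_imp_le pos)
  with not_summable show False ..
qed

lemma exists_used_superset:
  assumes "finite F" "F \<subseteq> range p"
  obtains N where "F \<subseteq> used N"
proof -
  have "finite (p -` F)" using assms(1) inj_p by (rule finite_vimageI)
  then obtain N where "p -` F \<subseteq> {..<N}" using finite_nat_bounded by blast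
  hence "F \<subseteq> used N" using assms(2) by (force simp: used_eq_image)
  thus thesis by (rule that)
qed

lemma surj_p: "surj p"
proof (rule ccontr)
  assume "\<not> surj p"
  define m where "m = (LEAST m. m \<notin> range p)"
  have m: "m \<notin> range p" unfolding m_def using \<open>\<not> surj p\<close> by (metis LeastI UNIV_eq_I)
  have "{..<m} \<subseteq> range p" using not_less_Least unfolding m_def by blast
  then obtain N0 where N0: "{..<m} \<subseteq> used N0" using exists_used_superset by blast
  obtain N1 where N1: "\<And>n. N1 \<le> n \<Longrightarrow> y n < y m"
    using order_tendstoD(2)[OF lim pos[of m]] by (auto simp: eventually_sequentially)
  obtain N where N: "max (max N0 N1) (Suc m) \<le> N" "N \<notin> used N" "d < sum y (pending N) + y N"
    using frequently_overflow by blast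
  have m_pending: "m \<in> pending N" using N(1) m by (auto simp: pending_def used_eq_image)
  moreover have "m \<le> i" if "i \<in> pending N" for i
    using that N0 used_mono[of N0 N] N(1) by (auto simp: pending_def not_le[symmetric])
  ultimately have "Min (pending N) = m" by (intro Min_eqI) auto
  hence "p N = m" using N N1[of N] m_pending by (cases N rule: step_cases) auto
  thus False using m by auto
qed

lemma bij_p: "bij p"
  using inj_p surj_p by (rule bijI)

lemma eventually_pending_ge: "\<forall>\<^sub>F N in sequentially. \<forall>i\<in>pending N. K \<le> i"
proof -
  obtain N0 where "{..<K} \<subseteq> used N0"
    using exists_used_superset[of "{..<K}"] surj_p by auto
  hence "\<forall>i\<in>pending N. K \<le> i" if "N0 \<le> N" for N
    using used_mono[OF that] by (auto simp: pending_def not_le[symmetric])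
  thus ?thesis by (auto simp: eventually_sequentially)
qed

lemma eventually_sum_pending_ge:
  assumes "0 < e"
  shows "\<forall>\<^sub>F N in sequentially. d - e \<le> sum y (pending N)"
proof -
  obtain K where K: "\<And>n. K \<le> n \<Longrightarrow> y n < e"
    using order_tendstoD(2)[OF lim assms] by (auto simp: eventually_sequentially)
  obtain N3 where N3: "\<And>N i. N3 \<le> N \<Longrightarrow> i \<in> pending N \<Longrightarrow> K \<le> i"
    using eventually_pending_ge[of K] by (auto simp: eventually_sequentially)
  have small: "y N \<le> e" "pending N \<noteq> {} \<Longrightarrow> y (Min (pending N)) \<le> e"
    if "max K N3 \<le> N" for N
  proof -
    show "y N \<le> e" using that K by (simp add: less_imp_le)
    assume "pending N \<noteq> {}"
    hence min_in: "Min (pending N) \<in> pending N" by simp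
    have "K \<le> Min (pending N)" using N3[OF _ min_in] that by simp
    thus "y (Min (pending N)) \<le> e" using K by (simp add: less_imp_le)
  qed
  obtain N4 where N4: "max K N3 \<le> N4" "N4 \<notin> used N4" "d < sum y (pending N4) + y N4"
    using frequently_overflow by blast
  have "d - e \<le> sum y (pending (Suc N))" if "N4 \<le> N" for N
    using that
  proof (induction rule: dec_induct)
    case base
    show ?case using N4 small by (intro sum_pending_Suc_ge) auto
  next
    case (step N)
    show ?case using step.IH step.hyps N4(1) small[of "Suc N"] by (intro sum_pending_Suc_ge) auto
  qed
  hence "\<forall>n\<ge>Suc N4. d - e \<le> sum y (pending n)" by (metis Suc_le_D Suc_le_mono)
  thus ?thesis by (auto simp: eventually_sequentially)
qed

lemma sum_pending_tendsto: "(\<lambda>N. sum y (pending N)) \<longlonglongrightarrow> d"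
proof (rule order_tendstoI)
  fix c assume "d < c"
  thus "\<forall>\<^sub>F N in sequentially. sum y (pending N) < c"
    by (intro always_eventually allI le_less_trans[OF sum_pending_le])
next
  fix c assume "c < d"
  hence "\<forall>\<^sub>F N in sequentially. d - (d - c) / 2 \<le> sum y (pending N)"
    by (intro eventually_sum_pending_ge) simp
  thus "\<forall>\<^sub>F N in sequentially. c < sum y (pending N)"
    by (rule eventually_mono) (use \<open>c < d\<close> in \<open>simp add: field_simps\<close>)
qed

lemma advanced_subset_reserve: "advanced N \<subseteq> reserve"
  unfolding advanced_def used_eq_image by (auto intro!: p_in_reserve_if_gt)

lemma sum_advanced_tendsto: "(\<lambda>N. sum y (advanced N)) \<longlonglongrightarrow> 0"
proof (rule order_tendstoI)
  fix c :: real assume "c < 0"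
  have "0 \<le> sum y (advanced N)" for N by (intro sum_nonneg) (simp add: less_imp_le pos)
  thus "\<forall>\<^sub>F N in sequentially. c < sum y (advanced N)"
    using \<open>c < 0\<close> by (intro always_eventually allI) (rule less_le_trans)
next
  fix c :: real assume "0 < c"
  then obtain K where K: "(1/2) ^ K < c / 2" using real_arch_pow_inv[of "c / 2" "1/2"] by auto
  have "sum y (advanced N) \<le> 2 * (1/2) ^ K" if "Suc (a K) \<le> N" for N
  proof (rule sum_reserve_le)
    show "advanced N \<subseteq> a ` {K..}"
    proof
      fix i assume i: "i \<in> advanced N"
      then obtain k where k: "i = a k" using advanced_subset_reserve by (auto simp: reserve_def)
      have "a K < a k" using i k that by (auto simp: advanced_def)
      hence "K \<le> k" using strict_mono_less[OF strict_mono_a] by simp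
      thus "i \<in> a ` {K..}" using k by simp
    qed
  qed (simp add: advanced_def)
  thus "\<forall>\<^sub>F N in sequentially. sum y (advanced N) < c"
    unfolding eventually_sequentially using K by force
qed

lemma partial_sum_eq: "(\<Sum>n<N. y n - y (p n)) = sum y (pending N) - sum y (advanced N)"
proof -
  have "(\<Sum>n<N. y n - y (p n)) = sum y {..<N} - sum (y \<circ> p) {..<N}"
    by (simp add: sum_subtractf)
  also have "sum (y \<circ> p) {..<N} = sum y (used N)"
    unfolding used_eq_image using inj_p by (simp add: sum.reindex inj_on_subset)
  also have "sum y {..<N} = sum y ({..<N} \<inter> used N) + sum y (pending N)"
    unfolding pending_def by (rule sum.Int_Diff) simp
  also have "sum y (used N) = sum y (used N \<inter> {..<N}) + sum y (advanced N)"
    unfolding advanced_def by (rule sum.Int_Diff) simp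
  finally show ?thesis by (simp add: Int_commute)
qed

lemma diff_sums: "(\<lambda>n. y n - y (p n)) sums d"
  unfolding sums_def partial_sum_eq
  using tendsto_diff[OF sum_pending_tendsto sum_advanced_tendsto] by simp

end

lemma exists_bij_diff_sums:
  fixes y :: "nat \<Rightarrow> real" and d :: real
  assumes "\<And>n. 0 < y n" "\<not> summable y" "y \<longlonglongrightarrow> 0" "0 \<le> d"
  shows "\<exists>p. bij p \<and> (\<lambda>n. y n - y (p n)) sums d"
proof -
  obtain a where "strict_mono a" "\<And>k. y (a k) < (1/2) ^ k"
    using exists_strict_mono_below[OF assms(3), of "\<lambda>k. (1/2) ^ k"] by auto
  then interpret greedy_rearrangement y d a
    using assms by unfold_locales (auto intro: less_imp_le)
  show ?thesis using bij_p diff_sums by blast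
qed

theorem mainTheorem5:
  fixes x :: "nat \<Rightarrow> real" and b :: real
  assumes "\<And>n. x n > 0"
    and "\<not> summable x"
    and "x \<longlonglongrightarrow> 0"
    and "b \<in> rearr_diff_sums x"
  shows "{b..} \<subseteq> rearr_diff_sums x"
proof
  fix c assume "c \<in> {b..}"
  obtain \<sigma> where \<sigma>: "bij \<sigma>" "(\<lambda>n. x n - x (\<sigma> n)) sums b"
    using assms(4) unfolding rearr_diff_sums_def by blast
  define y where "y = x \<circ> \<sigma>"
  have "y \<longlonglongrightarrow> 0"
    unfolding y_def comp_def
    by (rule filterlim_compose[OF assms(3) filterlim_inj_sequentially[OF bij_is_inj[OF \<sigma>(1)]]])
  moreover have "\<not> summable y"
    unfolding y_def using assms(1,2) \<sigma>(1) by (intro not_summable_comp_bij less_imp_le)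
  moreover have "0 \<le> c - b" using \<open>c \<in> {b..}\<close> by simp
  ultimately obtain p where p: "bij p" "(\<lambda>n. y n - y (p n)) sums (c - b)"
    using exists_bij_diff_sums[of y "c - b"] assms(1) by (auto simp: y_def)
  have "(\<lambda>n. (x n - x (\<sigma> n)) + (y n - y (p n))) sums (b + (c - b))"
    using \<sigma>(2) p(2) by (rule sums_add)
  hence "(\<lambda>n. x n - x ((\<sigma> \<circ> p) n)) sums c" by (simp add: y_def)
  moreover have "bij (\<sigma> \<circ> p)" using p(1) \<sigma>(1) by (rule bij_comp)
  ultimately show "c \<in> rearr_diff_sums x" unfolding rearr_diff_sums_def by blast
qed

end
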